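(* Let $G=(\mathscr{V},\mathscr{E},m_0,\theta)$ be a weighted graph (locally finite, connected, without loops), and let $m:\mathscr{V}\to(0,\infty)$ be arbitrary. Define, for $x\in\mathscr{V}$, \[ W_m(x):=\frac{1}{m_0^2(x)}\sum_{y\in\mathscr{V}}\mathscr{E}(x,y)\,\frac{m(y)}{m(x)}\,\frac{m_0(x)}{m_0(y)},\qquad V_m(x):=d_G(x)-W_m(x). \] Then \[ \langle f, V_m(Q)f\rangle\le \langle f,\Delta_{\mathscr{E},\theta}f\rangle\quad\text{for all } f\in\mathcal{C}_c(\mathscr{V}). \] Moreover, if $G$ is bi-partite, then \[ \langle f,\Delta_{\mathscr{E},\theta}f\rangle\le\langle f,(d_G(Q)+W_m(Q))f\rangle\quad\text{for all } f\in\mathcal{C}_c(\mathscr{V}). \]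
   Context: A weighted graph $G=(\mathscr{V},\mathscr{E},m_0,\theta)$ consists of a countable set $\mathscr{V}$, a symmetric map $\mathscr{E}:\mathscr{V}\times\mathscr{V}\to[0,\infty)$, a vertex weight $m_0:\mathscr{V}\to(0,\infty)$ and a phase $\theta:\mathscr{V}\times\mathscr{V}\to[-\pi,\pi]$ with $\theta(x,y)=-\theta(y,x)$. Vertices $x,y$ are neighbors ($x\sim y$) if $\mathscr{E}(x,y)\neq0$. Locally finite: every vertex has finitely many neighbors; connected: any two vertices are joined by a finite sequence of successive neighbors; no loops: $\mathscr{E}(x,x)=0$. The Hilbert space is $\ell^2(\mathscr{V},m_0^2)$ with $\langle f,g\rangle=\sum_x m_0^2(x)\overline{f(x)}g(x)$; $\mathcal{C}_c(\mathscr{V})$ denotes finitely supported functions. $\Delta_{\mathscr{E},\theta}$ is the Friedrichs extension of the form $\frac12\sum_{x,y}\mathscr{E}(x,y)|f(x)-e^{i\theta(x,y)}f(y)|^2$ on $\mathcal{C}_c(\mathscr{V})$; on $\mathcal{C}_c(\mathscr{V})$ it acts by $(\Delta_{\mathscr{E},\theta}f)(x)=m_0^{-2}(x)\sum_y\mathscr{E}(x,y)(f(x)-e^{i\theta(x,y)}f(y))$. The weighted degree is $d_G(x)=m_0^{-2}(x)\sum_y\mathscr{E}(x,y)$. For a function $W$ on $\mathscr{V}$, $W(Q)$ is multiplication by $W$. A graph is bi-partite if $\mathscr{V}$ can be partitioned into two subsets such that no two vertices in the same subset are neighbors. *)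

theory Defs
  imports "HOL-Analysis.Analysis" "HOL-Library.Complex_Order"
begin

definition weighted_graph ::
  "('v \<Rightarrow> 'v \<Rightarrow> real) \<Rightarrow> ('v \<Rightarrow> real) \<Rightarrow> ('v \<Rightarrow> 'v \<Rightarrow> real) \<Rightarrow> bool" where
  "weighted_graph E m0 \<theta> \<longleftrightarrow>
     (\<forall>x y. E x y = E y x) \<and> (\<forall>x y. 0 \<le> E x y) \<and>
     (\<forall>x. 0 < m0 x) \<and>
     (\<forall>x y. -pi \<le> \<theta> x y \<and> \<theta> x y \<le> pi \<and> \<theta> x y = - \<theta> y x)"

definition neighbors :: "('v \<Rightarrow> 'v \<Rightarrow> real) \<Rightarrow> 'v \<Rightarrow> 'v \<Rightarrow> bool" where
  "neighbors E x y \<longleftrightarrow> E x y \<noteq> 0"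

definition locally_finite :: "('v \<Rightarrow> 'v \<Rightarrow> real) \<Rightarrow> bool" where
  "locally_finite E \<longleftrightarrow> (\<forall>x. finite {y. neighbors E x y})"

definition connected_graph :: "('v \<Rightarrow> 'v \<Rightarrow> real) \<Rightarrow> bool" where
  "connected_graph E \<longleftrightarrow> (\<forall>x y. (neighbors E)\<^sup>*\<^sup>* x y)"

definition no_loops :: "('v \<Rightarrow> 'v \<Rightarrow> real) \<Rightarrow> bool" where
  "no_loops E \<longleftrightarrow> (\<forall>x. E x x = 0)"

definition bipartite :: "('v \<Rightarrow> 'v \<Rightarrow> real) \<Rightarrow> bool" where
  "bipartite E \<longleftrightarrow> (\<exists>A. \<forall>x y. neighbors E x y \<longrightarrow> (x \<in> A \<longleftrightarrow> y \<notin> A))"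

definition Cc :: "('v \<Rightarrow> complex) set" where
  "Cc = {f. finite {x. f x \<noteq> 0}}"

definition inner_m0 :: "('v \<Rightarrow> real) \<Rightarrow> ('v \<Rightarrow> complex) \<Rightarrow> ('v \<Rightarrow> complex) \<Rightarrow> complex" where
  "inner_m0 m0 f g = (\<Sum>\<^sub>\<infinity>x. complex_of_real ((m0 x)\<^sup>2) * cnj (f x) * g x)"

definition mag_laplacian ::
  "('v \<Rightarrow> 'v \<Rightarrow> real) \<Rightarrow> ('v \<Rightarrow> real) \<Rightarrow> ('v \<Rightarrow> 'v \<Rightarrow> real) \<Rightarrow> ('v \<Rightarrow> complex) \<Rightarrow> 'v \<Rightarrow> complex" where
  "mag_laplacian E m0 \<theta> f x =
     complex_of_real (1 / (m0 x)\<^sup>2) *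
       (\<Sum>\<^sub>\<infinity>y. complex_of_real (E x y) * (f x - cis (\<theta> x y) * f y))"

definition wdeg :: "('v \<Rightarrow> 'v \<Rightarrow> real) \<Rightarrow> ('v \<Rightarrow> real) \<Rightarrow> 'v \<Rightarrow> real" where
  "wdeg E m0 x = (1 / (m0 x)\<^sup>2) * (\<Sum>\<^sub>\<infinity>y. E x y)"

definition W_m :: "('v \<Rightarrow> 'v \<Rightarrow> real) \<Rightarrow> ('v \<Rightarrow> real) \<Rightarrow> ('v \<Rightarrow> real) \<Rightarrow> 'v \<Rightarrow> real" where
  "W_m E m0 m x = (1 / (m0 x)\<^sup>2) * (\<Sum>\<^sub>\<infinity>y. E x y * (m y / m x) * (m0 x / m0 y))"

definition V_m :: "('v \<Rightarrow> 'v \<Rightarrow> real) \<Rightarrow> ('v \<Rightarrow> real) \<Rightarrow> ('v \<Rightarrow> real) \<Rightarrow> 'v \<Rightarrow> real" where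
  "V_m E m0 m x = wdeg E m0 x - W_m E m0 m x"

definition mult_op :: "('v \<Rightarrow> real) \<Rightarrow> ('v \<Rightarrow> complex) \<Rightarrow> 'v \<Rightarrow> complex" where
  "mult_op W f x = complex_of_real (W x) * f x"

end

theory Submission
  imports Defs
begin

text \<open>For finitely supported \<open>f\<close> all sums are finite, and expanding the Laplacian gives
  \<open>\<langle>f, \<Delta> f\<rangle> = \<langle>f, d(Q) f\<rangle> - H\<close> with the hopping term
  \<open>H = \<Sum>x y. E x y * cnj (f x) * cis (\<theta> x y) * f y\<close>, which is real because \<open>E\<close> is
  symmetric and \<open>\<theta>\<close> antisymmetric. With \<open>w x y = E x y * (m y / m x) * (m0 x / m0 y)\<close>
  one has \<open>w x y * w y x = (E x y)\<^sup>2\<close>, so AM-GM gives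
  \<open>2 E x y |f x| |f y| \<le> w x y |f x|\<^sup>2 + w y x |f y|\<^sup>2\<close>, and summing,
  \<open>|H| \<le> \<langle>f, W(Q) f\<rangle>\<close>. Both estimates follow from \<open>-|H| \<le> H \<le> |H|\<close>.\<close>

lemma infsum_eq_sum_finite_support:
  fixes g :: "'a \<Rightarrow> 'b::{comm_monoid_add, t2_space}"
  assumes "finite S" "\<And>x. x \<notin> S \<Longrightarrow> g x = 0"
  shows "infsum g UNIV = sum g S"
proof -
  have "infsum g UNIV = infsum g S"
    by (rule infsum_cong_neutral) (use assms in auto)
  then show ?thesis using assms by simp
qed

lemma two_mult_le_scaled_squares:
  fixes a b r :: real
  assumes "0 < r"
  shows "2 * a * b \<le> r * a\<^sup>2 + b\<^sup>2 / r"
proof -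
  have "r * a\<^sup>2 + b\<^sup>2 / r - 2 * a * b = (r * a - b)\<^sup>2 / r"
    using assms by (simp add: field_simps power2_eq_square)
  also have "\<dots> \<ge> 0" using assms by simp
  finally show ?thesis by simp
qed

lemma inner_m0_mult_op:
  assumes "f \<in> Cc"
  shows "inner_m0 m0 f (mult_op U f)
           = of_real (\<Sum>x\<in>{x. f x \<noteq> 0}. (m0 x)\<^sup>2 * U x * (cmod (f x))\<^sup>2)"
proof -
  have "cnj (f x) * f x = of_real ((cmod (f x))\<^sup>2)" for x
    by (metis complex_norm_square mult.commute)
  then have summand: "of_real ((m0 x)\<^sup>2) * cnj (f x) * (of_real (U x) * f x)
               = of_real ((m0 x)\<^sup>2 * U x * (cmod (f x))\<^sup>2)" for x
    by (metis (no_types, lifting) mult.assoc mult.left_commute of_real_mult)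
  have "inner_m0 m0 f (mult_op U f)
       = (\<Sum>x\<in>{x. f x \<noteq> 0}. of_real ((m0 x)\<^sup>2) * cnj (f x) * (of_real (U x) * f x))"
    unfolding inner_m0_def mult_op_def
    using assms by (intro infsum_eq_sum_finite_support) (auto simp: Cc_def)
  then show ?thesis by (simp only: summand of_real_sum)
qed

lemma infsum_eq_sum_neighbors:
  fixes g :: "'v \<Rightarrow> 'b::{comm_monoid_add, t2_space}"
  assumes "locally_finite E" "\<And>y. E x y = 0 \<Longrightarrow> g y = 0"
  shows "infsum g UNIV = sum g {y. E x y \<noteq> 0}"
  using assms by (intro infsum_eq_sum_finite_support)
    (auto simp: locally_finite_def neighbors_def)

lemma m0_square_mult_wdeg:
  assumes "locally_finite E" "m0 x \<noteq> 0"
  shows "(m0 x)\<^sup>2 * wdeg E m0 x = (\<Sum>y\<in>{y. E x y \<noteq> 0}. E x y)"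
  using assms unfolding wdeg_def by (simp add: infsum_eq_sum_neighbors)

lemma m0_square_mult_W_m:
  assumes "locally_finite E" "m0 x \<noteq> 0"
  shows "(m0 x)\<^sup>2 * W_m E m0 m x
           = (\<Sum>y\<in>{y. E x y \<noteq> 0}. E x y * (m y / m x) * (m0 x / m0 y))"
  using assms unfolding W_m_def by (simp add: infsum_eq_sum_neighbors)

lemma inner_m0_mag_laplacian:
  assumes "locally_finite E" "\<And>x. m0 x \<noteq> 0" "f \<in> Cc"
  defines "A \<equiv> {x. f x \<noteq> 0}"
  shows "inner_m0 m0 f (mag_laplacian E m0 \<theta> f)
           = inner_m0 m0 f (mult_op (wdeg E m0) f)
             - (\<Sum>x\<in>A. \<Sum>y\<in>A. of_real (E x y) * cnj (f x) * cis (\<theta> x y) * f y)"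
proof -
  have A_fin: "finite A" using assms(3) by (simp add: A_def Cc_def)
  define N where "N x = {y. E x y \<noteq> 0}" for x
  have N_fin: "finite (N x)" for x
    using assms(1) by (simp add: N_def locally_finite_def neighbors_def)
  have hop_neighbors: "(\<Sum>y\<in>N x. of_real (E x y) * cnj (f x) * cis (\<theta> x y) * f y)
      = (\<Sum>y\<in>A. of_real (E x y) * cnj (f x) * cis (\<theta> x y) * f y)" for x
    by (rule sum.mono_neutral_cong[OF A_fin N_fin]) (auto simp: A_def N_def)
  have pointwise: "of_real ((m0 x)\<^sup>2) * cnj (f x) * mag_laplacian E m0 \<theta> f x
      = of_real ((m0 x)\<^sup>2) * cnj (f x) * (of_real (wdeg E m0 x) * f x)
        - (\<Sum>y\<in>A. of_real (E x y) * cnj (f x) * cis (\<theta> x y) * f y)" for x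
  proof -
    have "of_real ((m0 x)\<^sup>2) * cnj (f x) * mag_laplacian E m0 \<theta> f x
        = cnj (f x) * (\<Sum>y\<in>N x. of_real (E x y) * (f x - cis (\<theta> x y) * f y))"
      unfolding mag_laplacian_def using assms(1,2)
      by (simp add: infsum_eq_sum_neighbors N_def power2_eq_square)
    also have "\<dots> = cnj (f x) * (of_real (\<Sum>y\<in>N x. E x y) * f x)
        - (\<Sum>y\<in>N x. of_real (E x y) * cnj (f x) * cis (\<theta> x y) * f y)"
      by (simp add: algebra_simps sum_subtractf sum_distrib_left sum_distrib_right)
    also have "of_real (\<Sum>y\<in>N x. E x y) = of_real ((m0 x)\<^sup>2 * wdeg E m0 x)"
      using m0_square_mult_wdeg[of E m0 x, OF assms(1) assms(2)] by (simp only: N_def)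
    also note hop_neighbors
    finally show ?thesis by (simp add: algebra_simps)
  qed
  have "inner_m0 m0 f g = (\<Sum>x\<in>A. of_real ((m0 x)\<^sup>2) * cnj (f x) * g x)" for g
    unfolding inner_m0_def using A_fin
    by (intro infsum_eq_sum_finite_support) (auto simp: A_def)
  then show ?thesis
    unfolding mult_op_def by (simp only: pointwise sum_subtractf)
qed

lemma hopping_term_real:
  fixes A :: "'v set" and f :: "'v \<Rightarrow> complex"
  assumes "\<And>x y. E x y = E y x" "\<And>x y. \<theta> x y = - \<theta> y x"
  defines "H \<equiv> (\<Sum>x\<in>A. \<Sum>y\<in>A. of_real (E x y) * cnj (f x) * cis (\<theta> x y) * f y)"
  shows "H = of_real (Re H)"
proof -
  have cnj_summand: "cnj (of_real (E x y) * cnj (f x) * cis (\<theta> x y) * f y)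
          = of_real (E y x) * cnj (f y) * cis (\<theta> y x) * f x" for x y
    using assms(1,2)[of x y] by (simp add: cis_cnj algebra_simps)
  have "cnj H = (\<Sum>x\<in>A. \<Sum>y\<in>A. of_real (E y x) * cnj (f y) * cis (\<theta> y x) * f x)"
    unfolding H_def cnj_sum by (simp only: cnj_summand)
  also have "\<dots> = H"
    unfolding H_def by (rule sum.swap)
  finally have "cnj H = H" .
  then show ?thesis by (metis Reals_cnj_iff complex_is_Real_iff of_real_Re)
qed

lemma sum_edge_products_le_ground_state_weights:
  fixes E :: "'v \<Rightarrow> 'v \<Rightarrow> real"
  assumes "\<And>x y. E x y = E y x" "\<And>x y. 0 \<le> E x y" "\<And>x. 0 < m0 x" "\<And>x. 0 < m x"
  defines "w x y \<equiv> E x y * (m y / m x) * (m0 x / m0 y)"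
  shows "(\<Sum>x\<in>A. \<Sum>y\<in>A. E x y * a x * a y) \<le> (\<Sum>x\<in>A. \<Sum>y\<in>A. w x y * (a x)\<^sup>2)"
proof -
  have edge_amgm: "2 * (E x y * a x * a y) \<le> w x y * (a x)\<^sup>2 + w y x * (a y)\<^sup>2" for x y
  proof -
    define r where "r = (m y / m x) * (m0 x / m0 y)"
    have "0 < r" using assms(3,4) by (simp add: r_def)
    moreover have "w x y = E x y * r" "w y x = E x y / r"
      using assms(1)[of x y] assms(3,4) by (simp_all add: w_def r_def field_simps)
    ultimately show ?thesis
      using mult_left_mono[OF two_mult_le_scaled_squares assms(2)[of x y], of r "a x" "a y"]
      by (simp add: algebra_simps)
  qed
  have "2 * (\<Sum>x\<in>A. \<Sum>y\<in>A. E x y * a x * a y)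
          \<le> (\<Sum>x\<in>A. \<Sum>y\<in>A. w x y * (a x)\<^sup>2 + w y x * (a y)\<^sup>2)"
    unfolding sum_distrib_left by (intro sum_mono edge_amgm)
  also have "\<dots> = (\<Sum>x\<in>A. \<Sum>y\<in>A. w x y * (a x)\<^sup>2)
                      + (\<Sum>x\<in>A. \<Sum>y\<in>A. w y x * (a y)\<^sup>2)"
    by (simp add: sum.distrib)
  also have "(\<Sum>x\<in>A. \<Sum>y\<in>A. w y x * (a y)\<^sup>2) = (\<Sum>x\<in>A. \<Sum>y\<in>A. w x y * (a x)\<^sup>2)"
    by (rule sum.swap)
  finally show ?thesis by simp
qed

lemma hopping_term_bound:
  assumes "\<And>x y. E x y = E y x" "\<And>x y. 0 \<le> E x y"
    and "\<And>x. 0 < m0 x" "\<And>x. 0 < m x" "locally_finite E" "f \<in> Cc"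
  defines "A \<equiv> {x. f x \<noteq> 0}"
  shows "cmod (\<Sum>x\<in>A. \<Sum>y\<in>A. of_real (E x y) * cnj (f x) * cis (\<theta> x y) * f y)
           \<le> (\<Sum>x\<in>A. (m0 x)\<^sup>2 * W_m E m0 m x * (cmod (f x))\<^sup>2)"
proof -
  have A_fin: "finite A" using assms(6) by (simp add: A_def Cc_def)
  define a where "a x = cmod (f x)" for x
  define w where "w x y = E x y * (m y / m x) * (m0 x / m0 y)" for x y
  have "cmod (\<Sum>x\<in>A. \<Sum>y\<in>A. of_real (E x y) * cnj (f x) * cis (\<theta> x y) * f y)
          \<le> (\<Sum>x\<in>A. \<Sum>y\<in>A. E x y * a x * a y)"
    by (rule order_trans[OF norm_sum sum_mono], rule order_trans[OF norm_sum])
      (simp add: norm_mult a_def abs_of_nonneg assms(2))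
  also have "\<dots> \<le> (\<Sum>x\<in>A. \<Sum>y\<in>A. w x y * (a x)\<^sup>2)"
    unfolding w_def by (rule sum_edge_products_le_ground_state_weights[OF assms(1-4)])
  also have "\<dots> \<le> (\<Sum>x\<in>A. \<Sum>y\<in>{y. E x y \<noteq> 0}. w x y * (a x)\<^sup>2)"
  proof (rule sum_mono)
    fix x
    have w_nonneg: "0 \<le> w x y" for y
      using assms(2)[of x y] assms(3,4)[of x] assms(3,4)[of y] by (simp add: w_def)
    have N_fin: "finite {y. E x y \<noteq> 0}"
      using assms(5) by (simp add: locally_finite_def neighbors_def)
    have "(\<Sum>y\<in>A. w x y * (a x)\<^sup>2) = (\<Sum>y\<in>A \<inter> {y. E x y \<noteq> 0}. w x y * (a x)\<^sup>2)"
      by (rule sum.mono_neutral_right) (auto simp: A_fin w_def)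
    also have "\<dots> \<le> (\<Sum>y\<in>{y. E x y \<noteq> 0}. w x y * (a x)\<^sup>2)"
      by (rule sum_mono2) (auto simp: N_fin w_nonneg)
    finally show "(\<Sum>y\<in>A. w x y * (a x)\<^sup>2) \<le> (\<Sum>y\<in>{y. E x y \<noteq> 0}. w x y * (a x)\<^sup>2)" .
  qed
  also have "\<dots> = (\<Sum>x\<in>A. (m0 x)\<^sup>2 * W_m E m0 m x * (a x)\<^sup>2)"
    using m0_square_mult_W_m[OF assms(5)] assms(3)
    by (simp add: w_def sum_distrib_right less_imp_neq[symmetric])
  finally show ?thesis by (simp add: a_def)
qed

lemma inner_m0_mag_laplacian_bounds:
  assumes E_sym: "\<And>x y. E x y = E y x" and E_nonneg: "\<And>x y. 0 \<le> E x y"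
    and \<theta>_antisym: "\<And>x y. \<theta> x y = - \<theta> y x"
    and m0_pos: "\<And>x. 0 < m0 x" and m_pos: "\<And>x. 0 < m x"
    and fin: "locally_finite E" and f: "f \<in> Cc"
  shows "inner_m0 m0 f (mult_op (V_m E m0 m) f) \<le> inner_m0 m0 f (mag_laplacian E m0 \<theta> f)"
    and "inner_m0 m0 f (mag_laplacian E m0 \<theta> f)
           \<le> inner_m0 m0 f (mult_op (\<lambda>x. wdeg E m0 x + W_m E m0 m x) f)"
proof -
  define A where "A = {x. f x \<noteq> 0}"
  define H where "H = (\<Sum>x\<in>A. \<Sum>y\<in>A. of_real (E x y) * cnj (f x) * cis (\<theta> x y) * f y)"
  define q where "q U = (\<Sum>x\<in>A. (m0 x)\<^sup>2 * U x * (cmod (f x))\<^sup>2)" for U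
  have mult: "inner_m0 m0 f (mult_op U f) = of_real (q U)" for U
    unfolding q_def A_def by (rule inner_m0_mult_op[OF f])
  have "inner_m0 m0 f (mag_laplacian E m0 \<theta> f) = inner_m0 m0 f (mult_op (wdeg E m0) f) - H"
    unfolding H_def A_def
    by (rule inner_m0_mag_laplacian[OF fin _ f]) (use m0_pos in \<open>simp add: less_imp_neq[symmetric]\<close>)
  also have "H = of_real (Re H)"
    unfolding H_def by (rule hopping_term_real[OF E_sym \<theta>_antisym])
  finally have lap: "inner_m0 m0 f (mag_laplacian E m0 \<theta> f) = of_real (q (wdeg E m0) - Re H)"
    by (simp add: mult)
  have "\<bar>Re H\<bar> \<le> q (W_m E m0 m)"
    unfolding H_def q_def A_def
    by (rule order_trans[OF abs_Re_le_cmod hopping_term_bound[OF E_sym E_nonneg m0_pos m_pos fin f]])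
  moreover have "q (V_m E m0 m) = q (wdeg E m0) - q (W_m E m0 m)"
    "q (\<lambda>x. wdeg E m0 x + W_m E m0 m x) = q (wdeg E m0) + q (W_m E m0 m)"
    unfolding q_def V_m_def by (simp_all add: sum_subtractf sum.distrib ring_distribs)
  ultimately show "inner_m0 m0 f (mult_op (V_m E m0 m) f) \<le> inner_m0 m0 f (mag_laplacian E m0 \<theta> f)"
    and "inner_m0 m0 f (mag_laplacian E m0 \<theta> f)
           \<le> inner_m0 m0 f (mult_op (\<lambda>x. wdeg E m0 x + W_m E m0 m x) f)"
    by (simp_all add: mult lap less_eq_complex_def abs_le_iff)
qed

theorem proposition1p1:
  fixes E :: "'v::countable \<Rightarrow> 'v \<Rightarrow> real"
    and m0 m :: "'v \<Rightarrow> real"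
    and \<theta> :: "'v \<Rightarrow> 'v \<Rightarrow> real"
  assumes "weighted_graph E m0 \<theta>"
    and "locally_finite E"
    and "connected_graph E"
    and "no_loops E"
    and "\<forall>x. 0 < m x"
  shows "(\<forall>f \<in> Cc. inner_m0 m0 f (mult_op (V_m E m0 m) f)
                    \<le> inner_m0 m0 f (mag_laplacian E m0 \<theta> f))
       \<and> (bipartite E \<longrightarrow>
           (\<forall>f \<in> Cc. inner_m0 m0 f (mag_laplacian E m0 \<theta> f)
                    \<le> inner_m0 m0 f (mult_op (\<lambda>x. wdeg E m0 x + W_m E m0 m x) f)))"
proof -
  have "\<And>x y. E x y = E y x" "\<And>x y. 0 \<le> E x y" "\<And>x y. \<theta> x y = - \<theta> y x"
    "\<And>x. 0 < m0 x" "\<And>x. 0 < m x"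
    using assms(1,5) unfolding weighted_graph_def by blast+
  then show ?thesis
    using inner_m0_mag_laplacian_bounds[OF _ _ _ _ _ assms(2)] by blast
qed

end
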